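(* Let $T$ be a Fano tetrahedron in $\mathbb{Z}^3$ with vertices $x_1=(1,0,0)$, $x_2=(0,1,0)$, $x_3=(k''\lambda_4-a\lambda_1,\ k'\lambda_4-a\lambda_2,\ k\lambda_4)$, $x_4=(-k''\lambda_3-b\lambda_1,\ -k'\lambda_3-b\lambda_2,\ -k\lambda_3)$, where $\lambda_1\le\cdots\le\lambda_4$ are non-negative integers with $\gcd(\lambda_1,\ldots,\lambda_4)=1$ and $\sum_i\lambda_ix_i=0$, $a,b\in\mathbb{Z}$ with $a>0$ and $a\lambda_3+b\lambda_4=1$, and $k,k',k''\in\mathbb{N}$ with $0\le k''\lambda_4-a\lambda_1<k\lambda_4$ and $0\le k'\lambda_4-a\lambda_2<k\lambda_4$. Suppose that $k''\lambda_4-a\lambda_1=0$ or $k'\lambda_4-a\lambda_2=0$. Then $T$ is equivalent under $GL(3,\mathbb{Z})$ to the tetrahedron with vertices $e_1,e_2,e_3,-e_1-e_2-e_3$.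
   Context: A tetrahedron is called Fano if its vertices lie in $\mathbb{Z}^3$ and the only lattice point it contains other than its vertices is the origin, which lies strictly in its interior. $e_1,e_2,e_3$ is the standard basis of $\mathbb{Z}^3$. *)

theory Defs
  imports "HOL-Analysis.Analysis"
begin

definition vec3 :: "int \<Rightarrow> int \<Rightarrow> int \<Rightarrow> real^3" where
  "vec3 a b c = vector [real_of_int a, real_of_int b, real_of_int c]"

definition lattice_point :: "real^3 \<Rightarrow> bool" where
  "lattice_point x \<longleftrightarrow> (\<forall>i. x $ i \<in> \<int>)"

definition fano_tetrahedron :: "real^3 \<Rightarrow> real^3 \<Rightarrow> real^3 \<Rightarrow> real^3 \<Rightarrow> bool" where
  "fano_tetrahedron v1 v2 v3 v4 \<longleftrightarrow>
     card {v1, v2, v3, v4} = 4 \<and> \<not> affine_dependent {v1, v2, v3, v4} \<and>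
     (\<forall>v\<in>{v1, v2, v3, v4}. lattice_point v) \<and>
     {x \<in> convex hull {v1, v2, v3, v4}. lattice_point x} = insert 0 {v1, v2, v3, v4} \<and>
     0 \<in> interior (convex hull {v1, v2, v3, v4})"

definition GL3Z_equivalent :: "(real^3) set \<Rightarrow> (real^3) set \<Rightarrow> bool" where
  "GL3Z_equivalent V W \<longleftrightarrow>
     (\<exists>M :: real^3^3. (\<forall>i j. M $ i $ j \<in> \<int>) \<and> \<bar>det M\<bar> = 1 \<and> (\<lambda>v. M *v v) ` V = W)"

end

theory Submission
  imports Defs
begin

text \<open>The third vertex \<open>x\<^sub>3 = (p, q, K)\<close> has height \<open>K\<close>, and one of \<open>p, q\<close> vanishes, so
  \<open>x\<^sub>3\<close> spans a lattice triangle with \<open>0\<close> and one of \<open>e\<^sub>1, e\<^sub>2\<close>. If \<open>K \<ge> 2\<close>, that triangle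
  contains a lattice point at height 1, which is neither the origin nor a vertex (the fourth
  vertex has height \<open>-k\<lambda>\<^sub>3 \<le> 0\<close>); this contradicts the Fano property. Hence \<open>K = k\<lambda>\<^sub>4 = 1\<close>,
  which forces \<open>x\<^sub>3 = e\<^sub>3\<close>. If \<open>\<lambda>\<^sub>1 = 0\<close>, all four vertices would have non-negative first
  coordinate and the origin could not be interior; so \<open>\<lambda>\<^sub>1 = \<dots> = \<lambda>\<^sub>4 = 1\<close>, and then
  \<open>a\<lambda>\<^sub>3 + b\<lambda>\<^sub>4 = 1\<close> makes \<open>x\<^sub>4 = -e\<^sub>1 - e\<^sub>2 - e\<^sub>3\<close>: the tetrahedron is the standard one.\<close>

lemma vec3_nth [simp]: "vec3 a b c $ 1 = a" "vec3 a b c $ 2 = b" "vec3 a b c $ 3 = c"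
  by (simp_all add: vec3_def)

lemma lattice_point_vec3 [simp]: "lattice_point (vec3 a b c)"
  by (auto simp: lattice_point_def forall_3)

lemma GL3Z_equivalent_refl: "GL3Z_equivalent V V"
proof -
  have "\<forall>i j. mat 1 $ i $ j \<in> (\<int> :: real set)"
    by (simp add: mat_def)
  then show ?thesis
    unfolding GL3Z_equivalent_def by (intro exI[of _ "mat 1"]) (simp add: det_I)
qed

text \<open>Writing \<open>x = q e + K f\<close>, the point is \<open>f + \<lceil>q/K\<rceil> e\<close>: in the basis \<open>e, f\<close> it is
  the lattice point at height 1 of the triangle.\<close>
lemma convex_hull_triangle_lattice_point:
  fixes e x :: "'a::real_vector" and q K :: int
  assumes "0 \<le> q" "q < K" "2 \<le> K"
  shows "(1 / K) *\<^sub>R (x - q *\<^sub>R e) + (if q = 0 then 0 else 1) *\<^sub>R e \<in> convex hull {0, e, x}"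
proof -
  define c :: real where "c = (if q = 0 then 0 else 1)"
  have K: "real_of_int K \<ge> 2" "0 \<le> real_of_int q" "real_of_int q < K"
    using assms by simp_all
  have "q = 0 \<or> 1 \<le> q" using assms(1) by linarith
  then have coeffs: "0 \<le> c - q / K" "c - q / K + 1 / K \<le> 1"
    using K by (auto simp: c_def field_simps)
  have "(1 / K) *\<^sub>R (x - q *\<^sub>R e) + c *\<^sub>R e
      = (1 - (c - q / K) - 1 / K) *\<^sub>R 0 + (c - q / K) *\<^sub>R e + (1 / K) *\<^sub>R x"
    using K by (simp add: algebra_simps)
  also have "\<dots> \<in> convex hull {0, e, x}"
    unfolding convex_hull_3 using coeffs K by fastforce
  finally show ?thesis by (simp add: c_def)
qed

lemma zero_interior_convex_hull_imp_negative_component: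
  fixes S :: "(real^'n) set"
  assumes "0 \<in> interior (convex hull S)"
  shows "\<exists>v\<in>S. v $ i < 0"
proof (rule ccontr)
  assume "\<not> ?thesis"
  then have "S \<subseteq> {x. axis i 1 \<bullet> x \<ge> 0}"
    by (auto simp: inner_axis')
  then have "convex hull S \<subseteq> {x. axis i 1 \<bullet> x \<ge> 0}"
    by (rule hull_minimal) (rule convex_halfspace_ge)
  then have "interior (convex hull S) \<subseteq> interior {x. axis i 1 \<bullet> x \<ge> 0}"
    by (rule interior_mono)
  also have "\<dots> = {x. axis i 1 \<bullet> x > (0::real)}"
    by (simp add: axis_eq_0_iff)
  finally show False
    using assms by auto
qed

lemma fano_tetrahedron_triangle_lattice_point:
  assumes "fano_tetrahedron v1 v2 v3 v4"
    and "u \<in> {v1, v2, v3, v4}" "w \<in> {v1, v2, v3, v4}"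
    and "P \<in> convex hull {0, u, w}" "lattice_point P"
  shows "P \<in> {0, v1, v2, v3, v4}"
proof -
  let ?T = "convex hull {v1, v2, v3, v4}"
  have "0 \<in> ?T"
    using assms(1) interior_subset unfolding fano_tetrahedron_def by blast
  moreover have "u \<in> ?T" "w \<in> ?T"
    using assms(2,3) by (auto intro: hull_inc)
  ultimately have "convex hull {0, u, w} \<subseteq> ?T"
    by (simp add: hull_minimal)
  then show ?thesis
    using assms(1,4,5) unfolding fano_tetrahedron_def by blast
qed

lemma fano_tetrahedron_height_one:
  assumes fano: "fano_tetrahedron (vec3 1 0 0) (vec3 0 1 0) (vec3 p q K) x4"
    and "x4 $ 3 \<le> 0" "0 \<le> p" "p < K" "0 \<le> q" "q < K" "p = 0 \<or> q = 0"
  shows "K = 1"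
proof (rule ccontr)
  assume "K \<noteq> 1"
  then have K: "2 \<le> K" "real_of_int K \<noteq> 0"
    using assms(3,4) by linarith+
  obtain u P where u: "u \<in> {vec3 1 0 0, vec3 0 1 0}"
    and P: "P \<in> convex hull {0, u, vec3 p q K}" "lattice_point P" "P $ 3 = 1"
  proof (cases "p = 0")
    case True
    let ?P = "vec3 0 (if q = 0 then 0 else 1) 1"
    have "(1 / K) *\<^sub>R (vec3 p q K - q *\<^sub>R vec3 0 1 0) + (if q = 0 then 0 else 1) *\<^sub>R vec3 0 1 0 = ?P"
      using True K by (simp add: vec_eq_iff forall_3)
    then have "?P \<in> convex hull {0, vec3 0 1 0, vec3 p q K}"
      using convex_hull_triangle_lattice_point[of q K "vec3 p q K" "vec3 0 1 0"] assms(5,6) K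
      by simp
    then show thesis
      using that[of "vec3 0 1 0" ?P] by simp
  next
    case False
    then have "q = 0"
      using assms(7) by blast
    let ?P = "vec3 (if p = 0 then 0 else 1) 0 1"
    have "(1 / K) *\<^sub>R (vec3 p q K - p *\<^sub>R vec3 1 0 0) + (if p = 0 then 0 else 1) *\<^sub>R vec3 1 0 0 = ?P"
      using \<open>q = 0\<close> K by (simp add: vec_eq_iff forall_3)
    then have "?P \<in> convex hull {0, vec3 1 0 0, vec3 p q K}"
      using convex_hull_triangle_lattice_point[of p K "vec3 p q K" "vec3 1 0 0"] assms(3,4) K
      by simp
    then show thesis
      using that[of "vec3 1 0 0" ?P] by simp
  qed
  have "P \<in> {0, vec3 1 0 0, vec3 0 1 0, vec3 p q K, x4}"
    using fano_tetrahedron_triangle_lattice_point[OF fano _ _ P(1,2)] u by blast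
  then show False
    using P(3) K(1) assms(2) by auto
qed

theorem proposition3p2:
  fixes l1 l2 l3 l4 a b :: int and k k' k'' :: nat
  assumes "0 \<le> l1" "l1 \<le> l2" "l2 \<le> l3" "l3 \<le> l4"
    and "gcd (gcd l1 l2) (gcd l3 l4) = 1"
    and "a > 0" "a * l3 + b * l4 = 1"
    and "0 \<le> int k'' * l4 - a * l1" "int k'' * l4 - a * l1 < int k * l4"
    and "0 \<le> int k' * l4 - a * l2" "int k' * l4 - a * l2 < int k * l4"
    and "real_of_int l1 *\<^sub>R vec3 1 0 0 + real_of_int l2 *\<^sub>R vec3 0 1 0
         + real_of_int l3 *\<^sub>R vec3 (int k'' * l4 - a * l1) (int k' * l4 - a * l2) (int k * l4)
         + real_of_int l4 *\<^sub>R vec3 (- int k'' * l3 - b * l1) (- int k' * l3 - b * l2) (- int k * l3)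
         = 0"
    and "fano_tetrahedron (vec3 1 0 0) (vec3 0 1 0)
           (vec3 (int k'' * l4 - a * l1) (int k' * l4 - a * l2) (int k * l4))
           (vec3 (- int k'' * l3 - b * l1) (- int k' * l3 - b * l2) (- int k * l3))"
    and "int k'' * l4 - a * l1 = 0 \<or> int k' * l4 - a * l2 = 0"
  shows "GL3Z_equivalent
           {vec3 1 0 0, vec3 0 1 0,
            vec3 (int k'' * l4 - a * l1) (int k' * l4 - a * l2) (int k * l4),
            vec3 (- int k'' * l3 - b * l1) (- int k' * l3 - b * l2) (- int k * l3)}
           {vec3 1 0 0, vec3 0 1 0, vec3 0 0 1, vec3 (-1) (-1) (-1)}"
proof -
  let ?x3 = "vec3 (int k'' * l4 - a * l1) (int k' * l4 - a * l2) (int k * l4)"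
  let ?x4 = "vec3 (- int k'' * l3 - b * l1) (- int k' * l3 - b * l2) (- int k * l3)"
  note fano = assms(13)
  have "?x4 $ 3 \<le> 0"
    using assms(1-3) by simp
  then have "int k * l4 = 1"
    using fano_tetrahedron_height_one[OF fano] assms(8-11,14) by blast
  then have "k = 1" "l4 = 1"
    using assms(1-4) zmult_eq_1_iff[of "int k" l4] by auto
  then have k'': "int k'' = a * l1" and k': "int k' = a * l2"
    using assms(8-11) by auto
  have "\<exists>v\<in>{vec3 1 0 0, vec3 0 1 0, ?x3, ?x4}. v $ 1 < 0"
    using fano zero_interior_convex_hull_imp_negative_component
    unfolding fano_tetrahedron_def by blast
  then have "l1 \<noteq> 0"
    using k'' by auto
  then have "l1 = 1" "l2 = 1" "l3 = 1"
    using assms(1-4) \<open>l4 = 1\<close> by auto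
  moreover have "b = 1 - a"
    using assms(7) \<open>l3 = 1\<close> \<open>l4 = 1\<close> by simp
  ultimately show ?thesis
    using k'' k' \<open>k = 1\<close> \<open>l4 = 1\<close> by (simp add: GL3Z_equivalent_refl)
qed

end
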